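(* Let nonempty active action sets $A_{l,i}\subseteq\mathcal{A}$ be given, and let $\eta$ be the random exploration policy in which, independently for each state $(l,i)$, with probability $\frac{k}{2H}$ the action $e_{l,i}$ is drawn uniformly from $A_{l,i}$, and with probability $1-\frac{k}{2H}$ it is set to $e_{l,i}=\arg\max_{a\in A_{l,i}}p_i(l\mid l,a)$. Let $Q_{l,i}$ be the probability that $\eta$ visits state $(l,i)$. Then for any $i\in[H-1]$ and $l\in[k]$: $$Q_{s,i+1}\ \ge\ \max_{a\in A_{l,i}}\frac{k}{2HA}\,Q_{l,i}\,p_i(s\mid l,a)\qquad\text{for all } s<k,$$ and $$Q_{l,i+1}\ \ge\ \max_{a\in A_{l,i}}\Big(1-\frac{k}{2H}\Big)Q_{l,i}\,p_i(l\mid l,a)\ \ge\ \max_{a\in A_{l,i}}e^{-k/H}\,Q_{l,i}\,p_i(l\mid l,a).$$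
   Context: An episodic MDP has states $(l,i)$, $l\in[k]$, $i\in[H]$, with $k\le H$, a fixed start state in stage $1$, and an action set $\mathcal{A}$ of size $A$. For $i\in[H-1]$, action $a$ at state $(l,i)$ moves to state $(s,i+1)$ with probability $p_i(s\mid l,a)$, independently of everything else. (In the paper's setting the MDP is ordered: start state $(k,1)$, $p_i(s\mid l,a)=0$ for $s>l$, and the maximizer of $p_i(l\mid l,\cdot)$ over $A_{l,i}$ is identifiable from a known total order on actions.) A policy assigning an action to every state is executed by taking the assigned action at each visited state. *)

theory Defs
  imports "HOL-Probability.Probability"
begin

text \<open>States are pairs (l,i) with l in {1..k} (level) and i in {1..H} (stage).
  P i l a is the next-state distribution p_i(. | l, a) (over levels of stage i+1).\<close>

definition expl_action :: "real \<Rightarrow> 'a set \<Rightarrow> 'a \<Rightarrow> 'a pmf" where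
  "expl_action q As am = bernoulli_pmf q \<bind> (\<lambda>b. if b then pmf_of_set As else return_pmf am)"

definition expl_policy ::
  "nat \<Rightarrow> nat \<Rightarrow> (nat \<Rightarrow> nat \<Rightarrow> 'a set) \<Rightarrow> (nat \<Rightarrow> nat \<Rightarrow> 'a) \<Rightarrow> (nat \<times> nat \<Rightarrow> 'a) pmf" where
  "expl_policy k H As amax =
     Pi_pmf ({1..k} \<times> {1..H}) undefined
       (\<lambda>(l,i). expl_action (real k / (2 * real H)) (As l i) (amax l i))"

text \<open>Executing a deterministic policy pol from start level st:
  state_dist P st pol j is the distribution of the level occupied at stage j+1.\<close>
fun state_dist :: "(nat \<Rightarrow> nat \<Rightarrow> 'a \<Rightarrow> nat pmf) \<Rightarrow> nat \<Rightarrow> (nat \<times> nat \<Rightarrow> 'a) \<Rightarrow> nat \<Rightarrow> nat pmf" where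
  "state_dist P st pol 0 = return_pmf st"
| "state_dist P st pol (Suc j) =
     state_dist P st pol j \<bind> (\<lambda>l. P (Suc j) l (pol (l, Suc j)))"

text \<open>Q_{l,i}: probability that the random policy eta visits state (l,i), i \<ge> 1.\<close>
definition visit_prob ::
  "nat \<Rightarrow> nat \<Rightarrow> (nat \<Rightarrow> nat \<Rightarrow> 'a set) \<Rightarrow> (nat \<Rightarrow> nat \<Rightarrow> 'a) \<Rightarrow>
   (nat \<Rightarrow> nat \<Rightarrow> 'a \<Rightarrow> nat pmf) \<Rightarrow> nat \<Rightarrow> nat \<Rightarrow> nat \<Rightarrow> real" where
  "visit_prob k H As amax P st l i =
     pmf (expl_policy k H As amax \<bind> (\<lambda>pol. state_dist P st pol (i - 1))) l"

end

theory Submission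
  imports Defs
begin

(* Whether the exploration policy reaches (l,i) depends only on its choices at stages before i,
   which are independent of the action e_{l,i} it draws at (l,i). Hence Q_{s,i+1} is at least
   Q_{l,i} times the expectation of p_i(s | l, e_{l,i}), and this expectation, a mixture of the
   uniform distribution on A_{l,i} and the greedy action, dominates each of its two weighted
   components. The last inequality is e^{-x} <= 1 - x/2 on [0,1]. *)

lemma Max_image_mono:
  fixes f g :: "'a \<Rightarrow> 'b::linorder"
  assumes "finite A" "A \<noteq> {}" "\<And>a. a \<in> A \<Longrightarrow> f a \<le> g a"
  shows "(MAX a\<in>A. f a) \<le> (MAX a\<in>A. g a)"
  using assms by (auto intro!: Max.boundedI intro: order_trans[OF _ Max_ge])

lemma state_dist_cong:
  assumes "\<And>l m. 1 \<le> m \<Longrightarrow> m \<le> j \<Longrightarrow> pol (l, m) = pol' (l, m)"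
  shows "state_dist P st pol j = state_dist P st pol' j"
  using assms by (induction j) auto

lemma ennreal_pmf_bind_ge:
  "ennreal (pmf A x * pmf (B x) y) \<le> pmf (A \<bind> B) y"
proof -
  have "ennreal (pmf A x * pmf (B x) y)
      = (\<integral>\<^sup>+z. ennreal (pmf (B z) y) * indicator {x} z \<partial>measure_pmf A)"
    by (simp add: nn_integral_cmult_indicator emeasure_pmf_single ennreal_mult mult.commute)
  also have "\<dots> \<le> (\<integral>\<^sup>+z. pmf (B z) y \<partial>measure_pmf A)"
    by (intro nn_integral_mono) (auto split: split_indicator)
  finally show ?thesis
    by (simp add: ennreal_pmf_bind)
qed

lemma nn_integral_Pi_pmf_mult_component:
  assumes "finite D" "x \<in> D" and indep: "\<And>f y. \<phi> (f(x := y)) = \<phi> f"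
  shows "(\<integral>\<^sup>+f. \<phi> f * \<psi> (f x) \<partial>Pi_pmf D dflt p)
       = (\<integral>\<^sup>+f. \<phi> f \<partial>Pi_pmf D dflt p) * (\<integral>\<^sup>+y. \<psi> y \<partial>p x)"
proof -
  have D: "Pi_pmf D dflt p = map_pmf (\<lambda>(y, f). f(x := y)) (pair_pmf (p x) (Pi_pmf (D - {x}) dflt p))"
    using assms Pi_pmf_insert[of "D - {x}" x dflt p] by (simp add: insert_absorb)
  show ?thesis
    unfolding D
    by (simp add: nn_integral_pair_pmf' indep nn_integral_multc nn_integral_cmult
        measure_pmf.emeasure_space_1 mult.commute)
qed

lemma nn_integral_expl_action:
  fixes g :: "'a \<Rightarrow> real"
  assumes "0 \<le> q" "q \<le> 1" "finite As" "As \<noteq> {}" "\<And>a. 0 \<le> g a"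
  shows "(\<integral>\<^sup>+a. g a \<partial>expl_action q As am)
       = ennreal (q * (\<Sum>a\<in>As. g a) / card As + (1 - q) * g am)"
proof -
  have "(\<integral>\<^sup>+a. g a \<partial>pmf_of_set As) = ennreal ((\<Sum>a\<in>As. g a) / card As)"
    using assms by (simp add: nn_integral_pmf_of_set sum_nonneg divide_ennreal
        ennreal_of_nat_eq_real_of_nat card_gt_0_iff)
  then show ?thesis
    using assms
    by (simp add: expl_action_def ennreal_mult'' [symmetric] sum_nonneg mult.commute
        del: ennreal_plus add: ennreal_plus [symmetric])
qed

lemma visit_prob_Suc_ge:
  assumes "l \<in> {1..k}" "i \<in> {1..H}"
  shows "ennreal (visit_prob k H As amax P st l i)
           * (\<integral>\<^sup>+a. pmf (P i l a) s \<partial>expl_action (real k / (2 * real H)) (As l i) (amax l i))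
         \<le> visit_prob k H As amax P st s (Suc i)"
proof -
  let ?\<eta> = "expl_policy k H As amax"
  let ?reach = "\<lambda>pol. ennreal (pmf (state_dist P st pol (i - 1)) l)"
  have step: "state_dist P st pol i = state_dist P st pol (i - 1) \<bind> (\<lambda>l'. P i l' (pol (l', i)))"
    for pol
    using assms by (cases i) auto
  have reach_indep: "?reach (pol((l, i) := a)) = ?reach pol" for pol a
    by (subst state_dist_cong[where pol' = pol]) auto
  have "ennreal (visit_prob k H As amax P st l i)
          * (\<integral>\<^sup>+a. pmf (P i l a) s \<partial>expl_action (real k / (2 * real H)) (As l i) (amax l i))
        = (\<integral>\<^sup>+pol. ?reach pol * pmf (P i l (pol (l, i))) s \<partial>?\<eta>)"
    unfolding visit_prob_def expl_policy_def ennreal_pmf_bind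
    using assms by (subst nn_integral_Pi_pmf_mult_component[OF _ _ reach_indep]) auto
  also have "\<dots> \<le> (\<integral>\<^sup>+pol. pmf (state_dist P st pol (i - 1) \<bind> (\<lambda>l'. P i l' (pol (l', i)))) s \<partial>?\<eta>)"
    by (intro nn_integral_mono order_trans[OF _ ennreal_pmf_bind_ge[where x = l]]) (simp add: ennreal_mult)
  also have "\<dots> = visit_prob k H As amax P st s (Suc i)"
    by (simp add: visit_prob_def step ennreal_pmf_bind[of ?\<eta>])
  finally show ?thesis .
qed

lemma visit_prob_Suc_ge_mixture:
  assumes "k \<le> H" "l \<in> {1..k}" "i \<in> {1..H}" "finite (As l i)" "As l i \<noteq> {}"
  defines "q \<equiv> real k / (2 * real H)"
  shows "visit_prob k H As amax P st l i
           * (q * (\<Sum>a\<in>As l i. pmf (P i l a) s) / card (As l i) + (1 - q) * pmf (P i l (amax l i)) s)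
         \<le> visit_prob k H As amax P st s (Suc i)"
proof -
  have "0 \<le> q" "q \<le> 1"
    using assms by (auto simp: q_def field_simps)
  then have "ennreal (visit_prob k H As amax P st l i
           * (q * (\<Sum>a\<in>As l i. pmf (P i l a) s) / card (As l i) + (1 - q) * pmf (P i l (amax l i)) s))
         \<le> visit_prob k H As amax P st s (Suc i)"
    using visit_prob_Suc_ge[OF assms(2,3), of As amax P st s] assms(4,5)
    by (simp add: nn_integral_expl_action q_def ennreal_mult visit_prob_def sum_nonneg)
  then show ?thesis
    by (simp add: visit_prob_def)
qed

lemma visit_prob_Suc_ge_explore:
  assumes "k \<le> H" "l \<in> {1..k}" "i \<in> {1..H}" "finite (As l i)"
    and "a \<in> As l i" "card (As l i) \<le> N"
  shows "real k / (2 * real H * real N) * visit_prob k H As amax P st l i * pmf (P i l a) s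
         \<le> visit_prob k H As amax P st s (Suc i)"
proof -
  define q where "q = real k / (2 * real H)"
  have q: "0 \<le> q" "q \<le> 1" and card: "0 < card (As l i)"
    using assms by (auto simp: q_def field_simps card_gt_0_iff)
  have "q / N * pmf (P i l a) s \<le> q / card (As l i) * (\<Sum>a\<in>As l i. pmf (P i l a) s)"
    using assms q card by (intro mult_mono divide_left_mono member_le_sum) auto
  also have "\<dots> \<le> q * (\<Sum>a\<in>As l i. pmf (P i l a) s) / card (As l i) + (1 - q) * pmf (P i l (amax l i)) s"
    using q by simp
  finally have "visit_prob k H As amax P st l i * (q / N * pmf (P i l a) s)
      \<le> visit_prob k H As amax P st l i
           * (q * (\<Sum>a\<in>As l i. pmf (P i l a) s) / card (As l i) + (1 - q) * pmf (P i l (amax l i)) s)"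
    by (intro mult_left_mono) (simp_all add: visit_prob_def)
  also have "\<dots> \<le> visit_prob k H As amax P st s (Suc i)"
    using visit_prob_Suc_ge_mixture[of k H l i As amax P st s] assms by (auto simp: q_def)
  finally show ?thesis
    by (simp add: q_def mult_ac)
qed

lemma visit_prob_Suc_ge_greedy:
  assumes "k \<le> H" "l \<in> {1..k}" "i \<in> {1..H}" "finite (As l i)"
    and "a \<in> As l i" "pmf (P i l a) s \<le> pmf (P i l (amax l i)) s"
  shows "(1 - real k / (2 * real H)) * visit_prob k H As amax P st l i * pmf (P i l a) s
         \<le> visit_prob k H As amax P st s (Suc i)"
proof -
  define q where "q = real k / (2 * real H)"
  have q: "0 \<le> q" "q \<le> 1"
    using assms by (auto simp: q_def field_simps)
  have "(1 - q) * pmf (P i l a) s \<le> (1 - q) * pmf (P i l (amax l i)) s"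
    using assms q by (intro mult_left_mono) auto
  also have "\<dots> \<le> q * (\<Sum>a\<in>As l i. pmf (P i l a) s) / card (As l i) + (1 - q) * pmf (P i l (amax l i)) s"
    using q by (simp add: sum_nonneg)
  finally have "visit_prob k H As amax P st l i * ((1 - q) * pmf (P i l a) s)
      \<le> visit_prob k H As amax P st l i
           * (q * (\<Sum>a\<in>As l i. pmf (P i l a) s) / card (As l i) + (1 - q) * pmf (P i l (amax l i)) s)"
    by (intro mult_left_mono) (simp_all add: visit_prob_def)
  also have "\<dots> \<le> visit_prob k H As amax P st s (Suc i)"
    using visit_prob_Suc_ge_mixture[of k H l i As amax P st s] assms by (auto simp: q_def)
  finally show ?thesis
    by (simp add: q_def mult_ac)
qed

lemma exp_minus_le_one_minus_half:
  fixes x :: real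
  assumes "0 \<le> x" "x \<le> 1"
  shows "exp (- x) \<le> 1 - x / 2"
proof -
  have "exp (- x) \<le> 1 / (1 + x)"
    using exp_ge_add_one_self[of x] assms by (simp add: exp_minus field_simps)
  also have "\<dots> \<le> 1 - x / 2"
    using assms mult_left_le[of x x] by (simp add: field_simps)
  finally show ?thesis .
qed

theorem lemma9:
  fixes k H :: nat and Act :: "'a set" and As :: "nat \<Rightarrow> nat \<Rightarrow> 'a set"
    and amax :: "nat \<Rightarrow> nat \<Rightarrow> 'a" and P :: "nat \<Rightarrow> nat \<Rightarrow> 'a \<Rightarrow> nat pmf"
    and st l i :: nat
  defines "p \<equiv> (\<lambda>i s l a. pmf (P i l a) s)"
    and "Q \<equiv> visit_prob k H As amax P st"
  assumes k_pos: "1 \<le> k" and kH: "k \<le> H"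
    and Act_fin: "finite Act"
    and st_range: "st \<in> {1..k}"
    and trans_range: "\<And>i l a. i \<in> {1..<H} \<Longrightarrow> l \<in> {1..k} \<Longrightarrow> a \<in> Act \<Longrightarrow>
                              set_pmf (P i l a) \<subseteq> {1..k}"
    and As_sub: "\<And>l i. l \<in> {1..k} \<Longrightarrow> i \<in> {1..H} \<Longrightarrow> As l i \<subseteq> Act"
    and As_ne: "\<And>l i. l \<in> {1..k} \<Longrightarrow> i \<in> {1..H} \<Longrightarrow> As l i \<noteq> {}"
    and amax_in: "\<And>l i. l \<in> {1..k} \<Longrightarrow> i \<in> {1..H} \<Longrightarrow> amax l i \<in> As l i"
    and amax_max: "\<And>l i a. l \<in> {1..k} \<Longrightarrow> i \<in> {1..H} \<Longrightarrow> a \<in> As l i \<Longrightarrow>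
                             p i l l a \<le> p i l l (amax l i)"
    and i_range: "i \<in> {1..H-1}" and l_range: "l \<in> {1..k}"
  shows "(\<forall>s\<in>{1..k}. s < k \<longrightarrow>
            Q s (i+1) \<ge> (MAX a\<in>As l i. real k / (2 * real H * real (card Act)) * Q l i * p i s l a))
       \<and> Q l (i+1) \<ge> (MAX a\<in>As l i. (1 - real k / (2 * real H)) * Q l i * p i l l a)
       \<and> (MAX a\<in>As l i. (1 - real k / (2 * real H)) * Q l i * p i l l a)
           \<ge> (MAX a\<in>As l i. exp (- real k / real H) * Q l i * p i l l a)"
proof -
  have l: "l \<in> {1..k}" and i: "i \<in> {1..H}" "i + 1 = Suc i"
    using l_range i_range by auto
  have S: "finite (As l i)" "As l i \<noteq> {}" "card (As l i) \<le> card Act"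
    using As_sub[OF l i(1)] As_ne[OF l i(1)] Act_fin by (auto intro: finite_subset card_mono)
  have Q_nonneg: "0 \<le> Q l i"
    by (simp add: Q_def visit_prob_def)
  have exp_le: "exp (- real k / real H) \<le> 1 - real k / (2 * real H)"
    using exp_minus_le_one_minus_half[of "real k / real H"] kH k_pos by simp
  show ?thesis
  proof (intro conjI ballI impI)
    fix s assume "s \<in> {1..k}" "s < k"
    show "Q s (i + 1) \<ge> (MAX a\<in>As l i. real k / (2 * real H * real (card Act)) * Q l i * p i s l a)"
      using S visit_prob_Suc_ge_explore[where As = As and N = "card Act", OF kH l i(1) S(1) _ S(3)]
      by (auto simp: Q_def p_def i(2) intro!: Max.boundedI)
  next
    show "Q l (i + 1) \<ge> (MAX a\<in>As l i. (1 - real k / (2 * real H)) * Q l i * p i l l a)"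
      using S visit_prob_Suc_ge_greedy[where As = As, OF kH l i(1) S(1)] amax_max[OF l i(1)]
      by (auto simp: Q_def p_def i(2) intro!: Max.boundedI)
  next
    show "(MAX a\<in>As l i. (1 - real k / (2 * real H)) * Q l i * p i l l a)
        \<ge> (MAX a\<in>As l i. exp (- real k / real H) * Q l i * p i l l a)"
      using S exp_le Q_nonneg by (intro Max_image_mono mult_right_mono) (auto simp: p_def)
  qed
qed

end
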